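(* Let $G$ be a probability distribution on $\mathbb{R}$ (with finite second moment), let $\mu\sim G$ and $Z\sim N(0,1)$ be independent, and let $r(\tau, G) = \mathbb{E}_{\mu, Z} [(\eta(\mu+Z ; \tau) -\mu)^2]$ for $\tau\ge0$, where $\eta(a;\tau)=(|a|-\tau)_+\mathrm{sign}(a)$. Then \[ \frac{\partial r(\tau, G)}{\partial \tau}\Big|_{\tau=0}<0 . \] *)

theory Defs
  imports "HOL-Probability.Probability"
begin

definition soft_thresh :: "real \<Rightarrow> real \<Rightarrow> real" where
  "soft_thresh a \<tau> = max (\<bar>a\<bar> - \<tau>) 0 * sgn a"

definition risk :: "real \<Rightarrow> real measure \<Rightarrow> real" where
  "risk \<tau> G = (\<integral>(\<mu>, z). (soft_thresh (\<mu> + z) \<tau> - \<mu>)\<^sup>2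
                 \<partial>(G \<Otimes>\<^sub>M density lborel std_normal_density))"

end

theory Submission
  imports Defs
begin

(*
  For fixed \<mu> = m and Z = z, once 0 < \<tau> < |m + z| the squared error of soft thresholding
  exceeds its value z\<^sup>2 at \<tau> = 0 by \<tau>\<^sup>2 - 2 \<tau> z sgn (m + z), and the difference quotient is
  bounded by 2|z| + |m| + \<tau> for every \<tau> > 0.  Dominated convergence therefore gives the right
  derivative -2 E[Z sgn (\<mu> + Z)].  Conditionally on \<mu> = m this expectation is positive:
  subtracting E[Z sgn m] = 0 leaves E[Z (sgn (m + Z) - sgn m)], whose integrand is nonnegative
  and strictly positive on an interval, which has positive Gaussian measure.
*)

lemma soft_thresh_0 [simp]: "soft_thresh a 0 = a"
  by (simp add: soft_thresh_def max_def sgn_if abs_if)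

lemma soft_thresh_above: "\<tau> < \<bar>a\<bar> \<Longrightarrow> soft_thresh a \<tau> = a - \<tau> * sgn a"
  by (simp add: soft_thresh_def max_def sgn_if abs_if algebra_simps)

lemma soft_thresh_below: "\<bar>a\<bar> \<le> \<tau> \<Longrightarrow> soft_thresh a \<tau> = 0"
  by (simp add: soft_thresh_def max_def)

lemma soft_thresh_error_sq_le:
  assumes "0 \<le> \<tau>"
  shows "(soft_thresh (m + z) \<tau> - m)\<^sup>2 \<le> 3 * (m\<^sup>2 + z\<^sup>2 + \<tau>\<^sup>2)"
proof -
  have "\<bar>soft_thresh (m + z) \<tau> - m\<bar> \<le> \<bar>z\<bar> + \<bar>m\<bar> + \<tau>"
  proof (cases "\<tau> < \<bar>m + z\<bar>")
    case True
    have "\<bar>\<tau> * sgn (m + z)\<bar> \<le> \<tau>" using assms by (simp add: abs_mult sgn_if)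
    then show ?thesis using True by (simp add: soft_thresh_above)
  qed (use assms in \<open>simp add: soft_thresh_below\<close>)
  then have "(soft_thresh (m + z) \<tau> - m)\<^sup>2 \<le> (\<bar>z\<bar> + \<bar>m\<bar> + \<tau>)\<^sup>2"
    by (metis abs_ge_zero power2_abs power_mono)
  also have "\<dots> \<le> 3 * (m\<^sup>2 + z\<^sup>2 + \<tau>\<^sup>2)"
    using sum_squares_ge_zero[of "\<bar>z\<bar> - \<bar>m\<bar>" "\<bar>m\<bar> - \<tau>"] zero_le_power2[of "\<bar>z\<bar> - \<tau>"]
    by (simp add: power2_eq_square algebra_simps)
  finally show ?thesis .
qed

lemma soft_thresh_error_sq_diff_quotient_bound:
  assumes "0 < \<tau>"
  shows "\<bar>((soft_thresh (m + z) \<tau> - m)\<^sup>2 - z\<^sup>2) / \<tau>\<bar> \<le> 2 * \<bar>z\<bar> + \<bar>m\<bar> + \<tau>"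
proof (cases "\<tau> < \<bar>m + z\<bar>")
  case True
  then have "(sgn (m + z))\<^sup>2 = 1" using assms by (auto simp: sgn_if)
  then have "((soft_thresh (m + z) \<tau> - m)\<^sup>2 - z\<^sup>2) / \<tau> = \<tau> - 2 * z * sgn (m + z)"
    using True assms by (simp add: soft_thresh_above power2_eq_square field_simps)
  moreover have "\<bar>2 * z * sgn (m + z)\<bar> \<le> 2 * \<bar>z\<bar>"
    by (simp add: abs_mult sgn_if)
  ultimately show ?thesis using assms by linarith
next
  case False
  then have "(soft_thresh (m + z) \<tau> - m)\<^sup>2 - z\<^sup>2 = (m - z) * (m + z)"
    by (simp add: soft_thresh_below power2_eq_square algebra_simps)
  then have "\<bar>((soft_thresh (m + z) \<tau> - m)\<^sup>2 - z\<^sup>2) / \<tau>\<bar> = \<bar>m - z\<bar> * (\<bar>m + z\<bar> / \<tau>)"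
    using assms by (simp add: abs_mult)
  also have "\<dots> \<le> \<bar>m - z\<bar>"
    using False assms by (intro mult_right_le_one_le) auto
  finally show ?thesis using assms by linarith
qed

lemma soft_thresh_error_sq_right_derivative:
  "((\<lambda>\<tau>. ((soft_thresh (m + z) \<tau> - m)\<^sup>2 - z\<^sup>2) / \<tau>) \<longlongrightarrow> - 2 * (z * sgn (m + z)))
     (at_right 0)"
proof (cases "m + z = 0")
  case True
  then have "z = - m" by simp
  then have "\<forall>\<^sub>F \<tau> in at_right 0. ((soft_thresh (m + z) \<tau> - m)\<^sup>2 - z\<^sup>2) / \<tau> = 0"
    by (auto simp: eventually_at_right_field soft_thresh_below intro!: exI[of _ 1])
  with True show ?thesis by (simp add: tendsto_eventually)
next
  case False
  then have "(sgn (m + z))\<^sup>2 = 1" by (auto simp: sgn_if)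
  then have "\<forall>\<^sub>F \<tau> in at_right 0.
      \<tau> - 2 * (z * sgn (m + z)) = ((soft_thresh (m + z) \<tau> - m)\<^sup>2 - z\<^sup>2) / \<tau>"
    using False unfolding eventually_at_right_field
    by (intro exI[of _ "\<bar>m + z\<bar>"]) (auto simp: soft_thresh_above power2_eq_square field_simps)
  moreover have "((\<lambda>\<tau>. \<tau> - 2 * (z * sgn (m + z))) \<longlongrightarrow> - 2 * (z * sgn (m + z))) (at_right 0)"
    by (auto intro!: tendsto_eq_intros)
  ultimately show ?thesis by (rule Lim_transform_eventually[rotated])
qed

lemma integral_dominated_convergence_at_right:
  fixes s :: "real \<Rightarrow> 'a \<Rightarrow> 'b::{banach, second_countable_topology}" and w :: "'a \<Rightarrow> real"
  assumes "a < b"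
    and "\<And>t. a < t \<Longrightarrow> t < b \<Longrightarrow> s t \<in> borel_measurable M" "f \<in> borel_measurable M"
    and "integrable M w"
    and lim: "AE x in M. ((\<lambda>t. s t x) \<longlongrightarrow> f x) (at_right a)"
    and bound: "\<And>t. a < t \<Longrightarrow> t < b \<Longrightarrow> AE x in M. norm (s t x) \<le> w x"
  shows "((\<lambda>t. integral\<^sup>L M (s t)) \<longlongrightarrow> integral\<^sup>L M f) (at_right a)"
proof (rule tendsto_at_right_sequentially[OF \<open>a < b\<close>])
  fix S :: "nat \<Rightarrow> real"
  assume S: "\<And>n. a < S n" "\<And>n. S n < b" "S \<longlonglongrightarrow> a"
  have S_at_right: "filterlim S (at_right a) sequentially"
    using S by (intro tendsto_imp_filterlim_at_right) auto
  from lim have "AE x in M. (\<lambda>n. s (S n) x) \<longlonglongrightarrow> f x"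
    by eventually_elim (rule filterlim_compose[OF _ S_at_right])
  then show "(\<lambda>n. integral\<^sup>L M (s (S n))) \<longlonglongrightarrow> integral\<^sup>L M f"
    using assms S by (intro integral_dominated_convergence[where w = w]) auto
qed

lemma emeasure_density_lborel_neq_0:
  fixes f :: "'a::euclidean_space \<Rightarrow> real"
  assumes [measurable]: "f \<in> borel_measurable borel" "A \<in> sets borel"
    and "\<And>x. 0 < f x" "emeasure lborel A \<noteq> 0"
  shows "emeasure (density lborel f) A \<noteq> 0"
proof
  assume "emeasure (density lborel f) A = 0"
  then have "AE x in lborel. ennreal (f x) * indicator A x = 0"
    by (simp add: emeasure_density nn_integral_0_iff_AE)
  moreover have "ennreal (f x) * indicator A x \<noteq> 0" if "x \<in> A" for x
    using assms(3)[of x] that by (simp add: ennreal_eq_0_iff not_le)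
  ultimately have "AE x in lborel. x \<notin> A"
    by (auto elim: eventually_mono)
  then have "emeasure lborel A = 0"
    using AE_iff_measurable[of A lborel "\<lambda>x. x \<notin> A"] by simp
  with assms(4) show False ..
qed

lemma mult_sgn_shift_nonneg: "0 \<le> z * (sgn (m + z) - sgn (m::real))"
  by (cases "m < 0"; cases "m = 0"; cases "m + z < 0"; cases "m + z = 0")
     (auto simp: sgn_if mult_nonpos_nonpos)

lemma mult_sgn_shift_pos_on_interval:
  obtains a where "\<And>z. a < z \<Longrightarrow> z < a + 1 \<Longrightarrow> 0 < z * (sgn (m + z) - sgn (m::real))"
proof (cases "m < 0")
  case True
  then show ?thesis by (intro that[of "- m"]) (auto simp: sgn_if)
next
  case False
  then show ?thesis by (intro that[of "- m - 2"]) (auto simp: sgn_if mult_neg_neg)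
qed

lemma abs_mult_sgn_shift_le: "\<bar>z * (sgn (m + z) - sgn (m::real))\<bar> \<le> 2 * \<bar>z\<bar>"
proof -
  have "\<bar>sgn (m + z) - sgn m\<bar> \<le> 2" by (auto simp: sgn_if)
  then show ?thesis unfolding abs_mult by (simp add: mult.commute mult_left_mono)
qed

lemma std_normal_sgn_correlation_pos:
  "0 < (\<integral>z. z * sgn (m + z) \<partial>std_normal_distribution)"
proof -
  define w where "w z = z * (sgn (m + z) - sgn m)" for z
  have int_id: "integrable std_normal_distribution (\<lambda>z. z)"
    using integrable_std_normal_distribution_moment[of 1] by simp
  have int_w: "integrable std_normal_distribution (\<lambda>z. w z)"
  proof (rule Bochner_Integration.integrable_bound)
    show "integrable std_normal_distribution (\<lambda>z. 2 * \<bar>z\<bar>)"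
      using int_id by simp
    show "(\<lambda>z. w z) \<in> borel_measurable std_normal_distribution"
      unfolding w_def by measurable
    show "AE z in std_normal_distribution. norm (w z) \<le> norm (2 * \<bar>z\<bar>)"
      using abs_mult_sgn_shift_le by (simp add: w_def)
  qed
  interpret N: prob_space std_normal_distribution
    using real_dist_normal_dist by (simp add: real_distribution_def)
  obtain a where a: "\<And>z. a < z \<Longrightarrow> z < a + 1 \<Longrightarrow> 0 < w z"
    using mult_sgn_shift_pos_on_interval unfolding w_def by blast
  have "emeasure std_normal_distribution {a<..<a + 1} \<noteq> 0"
    by (rule emeasure_density_lborel_neq_0) (simp_all add: normal_density_pos)
  then have "(\<integral>z. 0 \<partial>std_normal_distribution) < (\<integral>z. w z \<partial>std_normal_distribution)"
    using a by (intro N.integral_less_AE[where A = "{a<..<a + 1}"] int_w)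
      (simp_all add: w_def mult_sgn_shift_nonneg less_imp_neq)
  also have "(\<integral>z. w z \<partial>std_normal_distribution)
      = (\<integral>z. w z + sgn m * z \<partial>std_normal_distribution)"
    using int_w int_id integral_std_normal_distribution_moment_odd[of 1] by simp
  also have "\<dots> = (\<integral>z. z * sgn (m + z) \<partial>std_normal_distribution)"
    by (simp add: w_def algebra_simps)
  finally show ?thesis by simp
qed

lemma (in pair_prob_space) integrable_fst_comp:
  fixes f :: "_ \<Rightarrow> _::{banach, second_countable_topology}"
  assumes "integrable M1 f"
  shows "integrable (M1 \<Otimes>\<^sub>M M2) (\<lambda>p. f (fst p))"
proof -
  have "integrable (distr (M1 \<Otimes>\<^sub>M M2) M1 fst) f"
    using assms by (simp add: M2.distr_pair_fst)
  then show ?thesis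
    using integrable_distr_eq[of fst "M1 \<Otimes>\<^sub>M M2" M1 f] assms by simp
qed

lemma (in pair_prob_space) integrable_snd_comp:
  fixes f :: "_ \<Rightarrow> _::{banach, second_countable_topology}"
  assumes "integrable M2 f"
  shows "integrable (M1 \<Otimes>\<^sub>M M2) (\<lambda>p. f (snd p))"
proof -
  interpret swapped: pair_prob_space M2 M1 ..
  have "integrable (M2 \<Otimes>\<^sub>M M1) (\<lambda>p. f (fst p))"
    using assms by (rule swapped.integrable_fst_comp)
  from swapped.integrable_product_swap[OF this] show ?thesis
    by (simp add: split_beta')
qed

lemma pair_prob_space_std_normal: "prob_space G \<Longrightarrow> pair_prob_space G std_normal_distribution"
  using prob_space_normal_density
  by (simp add: pair_prob_space_def pair_sigma_finite_def prob_space_imp_sigma_finite)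

lemma integrable_soft_thresh_error_sq:
  assumes "prob_space G" and sets_G [measurable_cong]: "sets G = sets borel"
    and "integrable G (\<lambda>x. x\<^sup>2)" and "0 \<le> \<tau>"
  shows "integrable (G \<Otimes>\<^sub>M std_normal_distribution) (\<lambda>(m, z). (soft_thresh (m + z) \<tau> - m)\<^sup>2)"
proof (rule Bochner_Integration.integrable_bound)
  interpret pair_prob_space G std_normal_distribution
    using assms(1) by (rule pair_prob_space_std_normal)
  show "integrable (G \<Otimes>\<^sub>M std_normal_distribution) (\<lambda>p. 3 * ((fst p)\<^sup>2 + (snd p)\<^sup>2 + \<tau>\<^sup>2))"
    using integrable_fst_comp[OF assms(3)]
      integrable_snd_comp[OF integrable_std_normal_distribution_moment[of 2]]
    by simp
  show "(\<lambda>(m, z). (soft_thresh (m + z) \<tau> - m)\<^sup>2) \<in> borel_measurable (G \<Otimes>\<^sub>M std_normal_distribution)"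
    unfolding soft_thresh_def by measurable
  show "AE p in G \<Otimes>\<^sub>M std_normal_distribution.
      norm ((\<lambda>(m, z). (soft_thresh (m + z) \<tau> - m)\<^sup>2) p) \<le> norm (3 * ((fst p)\<^sup>2 + (snd p)\<^sup>2 + \<tau>\<^sup>2))"
    using soft_thresh_error_sq_le[OF assms(4)] by (auto simp: split_beta')
qed

lemma risk_has_right_derivative:
  assumes "prob_space G" and sets_G [measurable_cong]: "sets G = sets borel"
    and "integrable G (\<lambda>x. x\<^sup>2)"
  shows "((\<lambda>\<tau>. risk \<tau> G) has_real_derivative
      - 2 * (\<integral>(m, z). z * sgn (m + z) \<partial>(G \<Otimes>\<^sub>M std_normal_distribution))) (at 0 within {0..})"
proof -
  interpret pair_prob_space G std_normal_distribution
    using assms(1) by (rule pair_prob_space_std_normal)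
  let ?M = "G \<Otimes>\<^sub>M std_normal_distribution"
  define q where "q \<tau> = (\<lambda>(m, z). ((soft_thresh (m + z) \<tau> - m)\<^sup>2 - z\<^sup>2) / \<tau>)" for \<tau>
  have quotient: "(risk \<tau> G - risk 0 G) / (\<tau> - 0) = integral\<^sup>L ?M (q \<tau>)" if "0 < \<tau>" for \<tau>
  proof -
    have "risk \<tau> G - risk 0 G
        = (\<integral>(m, z). (soft_thresh (m + z) \<tau> - m)\<^sup>2 - z\<^sup>2 \<partial>?M)"
      using integrable_soft_thresh_error_sq[OF assms, of \<tau>]
        integrable_soft_thresh_error_sq[OF assms, of 0] that
      unfolding risk_def by (simp add: split_beta')
    then show ?thesis
      by (simp add: q_def split_beta')
  qed
  have int_fst: "integrable ?M (\<lambda>p. \<bar>fst p\<bar>)"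
    using M1.square_integrable_imp_integrable[OF _ assms(3)]
    by (intro integrable_fst_comp integrable_abs) simp
  have int_snd: "integrable ?M (\<lambda>p. \<bar>snd p\<bar>)"
    using integrable_std_normal_distribution_moment[of 1]
    by (intro integrable_snd_comp integrable_abs) simp
  have "((\<lambda>\<tau>. integral\<^sup>L ?M (q \<tau>)) \<longlongrightarrow>
      integral\<^sup>L ?M (\<lambda>(m, z). - 2 * (z * sgn (m + z)))) (at_right 0)"
  proof (rule integral_dominated_convergence_at_right[where b = 1])
    show "integrable ?M (\<lambda>p. 2 * \<bar>snd p\<bar> + \<bar>fst p\<bar> + 1)"
      using int_fst int_snd by simp
    show "AE p in ?M. ((\<lambda>\<tau>. q \<tau> p) \<longlongrightarrow> (case p of (m, z) \<Rightarrow> - 2 * (z * sgn (m + z)))) (at_right 0)"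
      using soft_thresh_error_sq_right_derivative by (simp add: q_def split_beta')
    show "AE p in ?M. norm (q \<tau> p) \<le> 2 * \<bar>snd p\<bar> + \<bar>fst p\<bar> + 1" if "0 < \<tau>" "\<tau> < 1" for \<tau>
    proof (rule AE_I2)
      fix p :: "real \<times> real"
      have "\<bar>q \<tau> p\<bar> \<le> 2 * \<bar>snd p\<bar> + \<bar>fst p\<bar> + \<tau>"
        using soft_thresh_error_sq_diff_quotient_bound[OF that(1), of "fst p" "snd p"]
        by (simp add: q_def split_beta')
      then show "norm (q \<tau> p) \<le> 2 * \<bar>snd p\<bar> + \<bar>fst p\<bar> + 1"
        using that(2) by simp
    qed
  qed (auto simp: q_def soft_thresh_def)
  moreover have "\<forall>\<^sub>F \<tau> in at_right 0. integral\<^sup>L ?M (q \<tau>) = (risk \<tau> G - risk 0 G) / (\<tau> - 0)"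
    using quotient by (auto simp: eventually_at_right_field intro: exI[of _ 1])
  ultimately show ?thesis
    by (simp add: has_field_derivative_iff at_within_Ici_at_right tendsto_cong split_beta')
qed

lemma sgn_correlation_pos:
  assumes "prob_space G" and sets_G [measurable_cong]: "sets G = sets borel"
  shows "0 < (\<integral>(m, z). z * sgn (m + z) \<partial>(G \<Otimes>\<^sub>M std_normal_distribution))"
proof -
  interpret pair_prob_space G std_normal_distribution
    using assms(1) by (rule pair_prob_space_std_normal)
  have "integrable (G \<Otimes>\<^sub>M std_normal_distribution) (\<lambda>(m, z). z * sgn (m + z))"
  proof (rule Bochner_Integration.integrable_bound)
    show "integrable (G \<Otimes>\<^sub>M std_normal_distribution) (\<lambda>p. \<bar>snd p\<bar>)"
      using integrable_std_normal_distribution_moment[of 1]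
      by (intro integrable_snd_comp integrable_abs) simp
    show "(\<lambda>(m, z). z * sgn (m + z)) \<in> borel_measurable (G \<Otimes>\<^sub>M std_normal_distribution)"
      by measurable
  qed (simp add: split_beta' abs_mult abs_sgn_eq)
  then have "(\<integral>(m, z). z * sgn (m + z) \<partial>(G \<Otimes>\<^sub>M std_normal_distribution))
      = (\<integral>m. (\<integral>z. z * sgn (m + z) \<partial>std_normal_distribution) \<partial>G)"
       "integrable G (\<lambda>m. \<integral>z. z * sgn (m + z) \<partial>std_normal_distribution)"
    by (simp_all add: integral_fst integrable_fst)
  moreover have "(\<integral>m. 0 \<partial>G) < (\<integral>m. (\<integral>z. z * sgn (m + z) \<partial>std_normal_distribution) \<partial>G)"
    using calculation(2) std_normal_sgn_correlation_pos
    by (intro M1.integral_less_AE_space) (simp_all add: M1.emeasure_space_1)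
  ultimately show ?thesis by simp
qed

theorem lemma6:
  fixes G :: "real measure"
  assumes "prob_space G"
    and "sets G = sets borel"
    and "integrable G (\<lambda>x. x\<^sup>2)"
  shows "\<exists>D. ((\<lambda>\<tau>. risk \<tau> G) has_real_derivative D) (at 0 within {0..}) \<and> D < 0"
  using risk_has_right_derivative[OF assms] sgn_correlation_pos[OF assms(1,2)] by auto

end
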